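(* Let $s \in \{2,3\}$ and let $C_5 \rtimes_s C_4$ be the group generated by $x, y$ with relations $x^4 = 1$, $y^5 = 1$, $yx = xy^s$; let $H = \langle y \rangle$ and $N_i = x^iH$. Let $S$ be a sequence in $C_5 \rtimes_s C_4$ with $|S| = 7$. If all elements of $S$ belong to one coset $N_i$ with $i \in \{1,3\}$, then $S$ is not free of product-$1$ subsequences.
   Context: A sequence in a finite group $G$ is a finite list of elements of $G$, repetition allowed. A non-empty subsequence $(g_{n_1},\dots,g_{n_k})$ is a product-$1$ subsequence if $g_{\sigma(n_1)}\cdots g_{\sigma(n_k)} = 1$ for some permutation $\sigma$ of $\{n_1,\dots,n_k\}$; $S$ is free of product-$1$ subsequences if it has no such subsequence. *)

theory Defs
  imports "HOL-Algebra.Algebra"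
begin

text \<open>A product-1 subsequence
is given by a non-empty list of distinct positions (the order of the list encodes the
permutation) whose product in that order is the identity.\<close>

definition product_one_free :: "('a, 'b) monoid_scheme \<Rightarrow> 'a list \<Rightarrow> bool" where
  "product_one_free G S \<longleftrightarrow>
     \<not> (\<exists>js. js \<noteq> [] \<and> distinct js \<and> set js \<subseteq> {..<length S} \<and>
            foldr (\<lambda>g acc. g \<otimes>\<^bsub>G\<^esub> acc) (map (\<lambda>j. S ! j) js) \<one>\<^bsub>G\<^esub> = \<one>\<^bsub>G\<^esub>)"

end

theory Submission
  imports Defs
begin

text \<open>
  Write t = s^i. Every element of the coset x^i<y> is x^i y^b with b < 5, and y x = x y^s gives
  y^b x^n = x^n y^(s^n b), so a product of four such elements is x^(4i) y^E with
  E = t^3 a1 + t^2 a2 + t a3 + a4, where x^(4i) = 1. As t^2 = -1 (mod 5), E = t (a3 - a1) + (a4 - a2)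
  (mod 5). Among seven residues mod 5 there are either two disjoint pairs of equal ones, which make
  E vanish, or all five residues occur and residues making E vanish can be picked directly.
\<close>

lemma exists_collision_if_card_less:
  assumes "finite B" and "f ` A \<subseteq> B" and "card B < card A"
  shows "\<exists>p\<in>A. \<exists>q\<in>A. p \<noteq> q \<and> f p = f q"
proof -
  have "card (f ` A) < card A"
    using assms card_mono[OF assms(1,2)] by linarith
  then show ?thesis
    using pigeonhole unfolding inj_on_def by blast
qed

lemma dvd_5_plus_2_or_plus_3_if_dvd_square_plus_1:
  fixes t :: nat
  assumes "5 dvd t^2 + 1"
  shows "5 dvd t + 2 \<or> 5 dvd t + 3"
proof -
  have "t^2 mod 5 = 4"
    using assms by (simp add: dvd_eq_mod_eq_0 mod_Suc split: if_splits)
  then have "(t mod 5)^2 mod 5 = 4"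
    by (simp add: power_mod)
  moreover have "t mod 5 \<in> {0, 1, 2, 3, 4}" by auto
  ultimately have "t mod 5 = 2 \<or> t mod 5 = 3"
    by (auto simp: power2_eq_square)
  then show ?thesis by presburger
qed

lemma exists_distinct_four_twisted_sum_dvd_5:
  fixes a :: "nat \<Rightarrow> nat" and t :: nat
  assumes a: "\<forall>k<7. a k < 5" and t: "5 dvd t^2 + 1"
  shows "\<exists>j1 j2 j3 j4. distinct [j1, j2, j3, j4] \<and> set [j1, j2, j3, j4] \<subseteq> {..<7} \<and>
           5 dvd t^3 * a j1 + t^2 * a j2 + t * a j3 + a j4"
proof (cases "{..<5} \<subseteq> a ` {..<7}")
  case False
  then obtain v where v: "v < 5" "v \<notin> a ` {..<7}"
    by auto
  have image_in: "a ` A \<subseteq> {..<5} - {v}" if "A \<subseteq> {..<7}" for A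
    using a v that by auto
  have card_4: "card ({..<5::nat} - {v}) = 4"
    using v by simp
  have collision: "\<exists>p\<in>A. \<exists>q\<in>A. p \<noteq> q \<and> a p = a q"
    if "A \<subseteq> {..<7}" and "4 < card A" for A
    using exists_collision_if_card_less[of "{..<5} - {v}" a A] image_in[OF that(1)] card_4 that(2)
    by simp
  obtain p1 p2 where p: "p1 < 7" "p2 < 7" "p1 \<noteq> p2" "a p1 = a p2"
    using collision[of "{..<7}"] by auto
  have "card ({..<7::nat} - {p1, p2}) = 5"
    using p by (simp add: card_Diff_subset)
  then obtain q1 q2 where q: "q1 \<in> {..<7} - {p1, p2}" "q2 \<in> {..<7} - {p1, p2}"
    "q1 \<noteq> q2" "a q1 = a q2"
    using collision[of "{..<7} - {p1, p2}"] by auto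
  have "t^3 * a p1 + t^2 * a q1 + t * a p2 + a q2 = (t^2 + 1) * (t * a p1 + a q1)"
    using p q by (simp add: algebra_simps power2_eq_square power3_eq_cube)
  then have "5 dvd t^3 * a p1 + t^2 * a q1 + t * a p2 + a q2"
    using t by (metis dvd_mult2)
  then show ?thesis
    using p q by (intro exI[of _ p1] exI[of _ q1] exI[of _ p2] exI[of _ q2]) auto
next
  case True
  then have "\<forall>v\<in>{..<5}. \<exists>k. k < 7 \<and> a k = v" by auto
  then have "\<exists>k. \<forall>v\<in>{..<5}. k v < 7 \<and> a (k v) = v" by (rule bchoice)
  then obtain k where k: "k v < 7" "a (k v) = v" if "v < 5" for v by auto
  have "inj_on k {..<5}"
    by (rule inj_on_inverseI[where g = a]) (simp add: k)
  then have distinct: "distinct [k 0, k 1, k 2, k 4]"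
    by (simp add: inj_on_eq_iff)
  have in_range: "set [k 0, k 1, k 2, k 4] \<subseteq> {..<7}"
    and k_vals: "a (k 0) = 0" "a (k 1) = 1" "a (k 2) = 2" "a (k 4) = 4"
    by (simp_all add: k)
  from t consider "5 dvd t + 3" | "5 dvd t + 2"
    using dvd_5_plus_2_or_plus_3_if_dvd_square_plus_1 by blast
  then show ?thesis
  proof cases
    case 1
    have "(t^3 * 1 + t^2 * 2 + t * 0 + 4) + (t + 3) = (t + 2) * (t^2 + 1) + 5"
      by (simp add: algebra_simps power2_eq_square power3_eq_cube)
    then have "5 dvd (t^3 * 1 + t^2 * 2 + t * 0 + 4) + (t + 3)"
      using t by (metis dvd_add dvd_mult dvd_refl)
    then have "5 dvd t^3 * 1 + t^2 * 2 + t * 0 + 4"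
      using 1 dvd_add_left_iff by blast
    then show ?thesis
      using distinct in_range k_vals
      by (intro exI[of _ "k 1"] exI[of _ "k 2"] exI[of _ "k 0"] exI[of _ "k 4"]) auto
  next
    case 2
    have "(t^3 * 1 + t^2 * 4 + t * 0 + 2) + (t + 2) = (t + 4) * (t^2 + 1)"
      by (simp add: algebra_simps power2_eq_square power3_eq_cube)
    then have "5 dvd (t^3 * 1 + t^2 * 4 + t * 0 + 2) + (t + 2)"
      using t by (metis dvd_mult)
    then have "5 dvd t^3 * 1 + t^2 * 4 + t * 0 + 2"
      using 2 dvd_add_left_iff by blast
    then show ?thesis
      using distinct in_range k_vals
      by (intro exI[of _ "k 1"] exI[of _ "k 4"] exI[of _ "k 0"] exI[of _ "k 2"]) auto
  qed
qed

lemma (in group) pow_mult_eq_mult_pow_twisted: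
  assumes x: "x \<in> carrier G" and y: "y \<in> carrier G" and r: "y \<otimes> x = x \<otimes> y [^] (s::nat)"
  shows "y [^] (a::nat) \<otimes> x = x \<otimes> y [^] (s * a)"
proof (induction a)
  case 0
  then show ?case using x by simp
next
  case (Suc a)
  have "y [^] Suc a \<otimes> x = y [^] a \<otimes> (y \<otimes> x)"
    using x y by (simp add: m_assoc)
  also have "\<dots> = (y [^] a \<otimes> x) \<otimes> y [^] s"
    using x y r by (simp add: m_assoc)
  also have "\<dots> = x \<otimes> y [^] (s * Suc a)"
    using Suc x y by (simp add: m_assoc nat_pow_mult add.commute)
  finally show ?case .
qed

lemma (in group) pow_mult_pow_eq_twisted:
  assumes x: "x \<in> carrier G" and y: "y \<in> carrier G" and r: "y \<otimes> x = x \<otimes> y [^] (s::nat)"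
  shows "y [^] (a::nat) \<otimes> x [^] (n::nat) = x [^] n \<otimes> y [^] (s^n * a)"
proof (induction n arbitrary: a)
  case 0
  then show ?case using y by simp
next
  case (Suc n)
  have "y [^] a \<otimes> x [^] Suc n = (y [^] a \<otimes> x [^] n) \<otimes> x"
    using x y by (simp add: m_assoc)
  also have "\<dots> = x [^] n \<otimes> (y [^] (s^n * a) \<otimes> x)"
    using Suc x y by (simp add: m_assoc)
  also have "\<dots> = x [^] Suc n \<otimes> y [^] (s^Suc n * a)"
    using pow_mult_eq_mult_pow_twisted[OF x y r] x y by (simp add: m_assoc mult.assoc)
  finally show ?case .
qed

lemma (in group) normal_form_mult:
  assumes x: "x \<in> carrier G" and y: "y \<in> carrier G" and r: "y \<otimes> x = x \<otimes> y [^] (s::nat)"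
  shows "(x [^] (i::nat) \<otimes> y [^] (a::nat)) \<otimes> (x [^] (n::nat) \<otimes> y [^] (e::nat))
           = x [^] (i + n) \<otimes> y [^] (s^n * a + e)"
proof -
  have "(x [^] i \<otimes> y [^] a) \<otimes> (x [^] n \<otimes> y [^] e)
          = x [^] i \<otimes> (y [^] a \<otimes> x [^] n) \<otimes> y [^] e"
    using x y by (simp add: m_assoc)
  also have "\<dots> = (x [^] i \<otimes> x [^] n) \<otimes> (y [^] (s^n * a) \<otimes> y [^] e)"
    using pow_mult_pow_eq_twisted[OF x y r] x y by (simp add: m_assoc)
  finally show ?thesis
    using x y by (simp add: nat_pow_mult)
qed

lemma (in group) product_four_normal_forms:
  assumes x: "x \<in> carrier G" and y: "y \<in> carrier G" and r: "y \<otimes> x = x \<otimes> y [^] (s::nat)"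
  shows "(x [^] (i::nat) \<otimes> y [^] (a1::nat)) \<otimes> ((x [^] i \<otimes> y [^] (a2::nat)) \<otimes>
           ((x [^] i \<otimes> y [^] (a3::nat)) \<otimes> (x [^] i \<otimes> y [^] (a4::nat))))
         = x [^] (4 * i) \<otimes> y [^] ((s^i)^3 * a1 + (s^i)^2 * a2 + s^i * a3 + a4)"
proof -
  have "(s^i)^3 = s^(i + (i + i))" "(s^i)^2 = s^(i + i)" "4 * i = i + (i + (i + i))"
    by (simp_all add: power_add power3_eq_cube power2_eq_square)
  then show ?thesis
    by (simp only: normal_form_mult[OF x y r] add.assoc)
qed

lemma (in group) l_coset_cyclic_elem:
  assumes y: "y \<in> carrier G" and y_n: "y [^] (n::nat) = \<one>" and n: "0 < n"
    and g: "g \<in> x <# generate G {y}"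
  shows "\<exists>b<n. g = x \<otimes> y [^] b"
proof -
  obtain z :: int where g_z: "g = x \<otimes> y [^] z"
    using g generate_pow[OF y] unfolding l_coset_def by auto
  have "int (ord y) dvd int n"
    using y y_n pow_eq_id by simp
  then have "int (ord y) dvd z - z mod int n"
    using dvd_minus_mod by (rule dvd_trans)
  then have "y [^] (z mod int n) = y [^] z"
    using y int_pow_eq by simp
  moreover have "y [^] nat (z mod int n) = y [^] (z mod int n)"
    using n by (simp flip: int_pow_int)
  ultimately show ?thesis
    using g_z n by (intro exI[of _ "nat (z mod int n)"]) (simp add: nat_less_iff)
qed

lemma (in group) list_in_l_coset_cyclic_exponents:
  assumes y: "y \<in> carrier G" and y_n: "y [^] (n::nat) = \<one>" and n: "0 < n"
    and S: "set S \<subseteq> x <# generate G {y}"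
  shows "\<exists>a. \<forall>k<length S. a k < n \<and> S ! k = x \<otimes> y [^] a k"
proof -
  have "\<forall>k\<in>{..<length S}. \<exists>b<n. S ! k = x \<otimes> y [^] b"
    using l_coset_cyclic_elem[OF y y_n n] S nth_mem by blast
  then have "\<exists>a. \<forall>k\<in>{..<length S}. a k < n \<and> S ! k = x \<otimes> y [^] a k"
    by (rule bchoice)
  then show ?thesis
    by auto
qed

theorem proposition2:
  fixes G (structure) and x y :: 'a and s i :: nat and S :: "'a list"
  assumes "group G"
    and "s \<in> {2, 3}"
    and "x \<in> carrier G" and "y \<in> carrier G"
    and "carrier G = generate G {x, y}"
    and "x [^] (4::nat) = \<one>" and "y [^] (5::nat) = \<one>"
    and "y \<otimes> x = x \<otimes> y [^] s"
    and "order G = 20"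
    and "set S \<subseteq> carrier G" and "length S = 7"
    and "i \<in> {1, 3}"
    and "set S \<subseteq> x [^] i <# generate G {y}"
  shows "\<not> product_one_free G S"
proof -
  interpret group G by fact
  obtain a :: "nat \<Rightarrow> nat" where a: "a k < 5" "S ! k = x [^] i \<otimes> y [^] a k" if "k < 7" for k
    using list_in_l_coset_cyclic_exponents[OF assms(4,7) _ assms(13)] assms(11) by auto
  have "5 dvd (s^i)^2 + 1"
    using assms(2,12) by auto
  then obtain j1 j2 j3 j4 where j: "distinct [j1, j2, j3, j4]" "set [j1, j2, j3, j4] \<subseteq> {..<7}"
    and dvd_5: "5 dvd (s^i)^3 * a j1 + (s^i)^2 * a j2 + s^i * a j3 + a j4"
    using exists_distinct_four_twisted_sum_dvd_5[of a] a(1) by blast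
  have "ord y dvd 5"
    using assms(4,7) pow_eq_id by simp
  then have "y [^] ((s^i)^3 * a j1 + (s^i)^2 * a j2 + s^i * a j3 + a j4) = \<one>"
    using dvd_5 assms(4) pow_eq_id dvd_trans by simp
  moreover have "x [^] (4 * i) = \<one>"
    using assms(3,6) by (simp add: nat_pow_pow[symmetric])
  ultimately have "foldr (\<lambda>g acc. g \<otimes> acc) (map ((!) S) [j1, j2, j3, j4]) \<one> = \<one>"
    using j(2) a(2) product_four_normal_forms[OF assms(3,4,8)] assms(3,4) by simp
  then show ?thesis
    unfolding product_one_free_def using j assms(11) by fastforce
qed

end
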